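(* Let $(\Sigma,w)$ be a doubly weighted signed graph and $v_0\in V(\Sigma)$, and let $(\Sigma^{v_0},w^{v_0})$ be obtained by switching at $v_0$. Then $X_{(\Sigma,w)}=X_{(\Sigma^{v_0},w^{v_0})}$.
   Context: A signed graph $\Sigma$ is a finite graph (loops and multiple edges allowed) together with $\mathrm{sgn}:E(\Sigma)\to\{+,-\}$; write $e:uv$ if $e$ has endpoints $u,v$. A coloring $\kappa:V(\Sigma)\to\mathbb{Z}$ is proper if $\kappa(u)\ne\mathrm{sgn}(e)\kappa(v)$ for every edge $e:uv$. A double weight is a pair $w=(w_+,w_-)$ of functions $V(\Sigma)\to\mathbb{N}=\{0,1,2,\dots\}$, and $X_{(\Sigma,w)}=\sum_{\kappa\text{ proper}}\prod_{v\in V(\Sigma)}x_{\kappa(v)}^{w_+(v)}x_{-\kappa(v)}^{w_-(v)}$ in commuting variables $x_i$, $i\in\mathbb{Z}$. Switching at $v_0$: $w^{v_0}$ agrees with $w$ except that if $w(v_0)=(a,b)$ then $w^{v_0}(v_0)=(b,a)$; $\Sigma^{v_0}$ is $\Sigma$ with the sign of every non-loop edge incident to $v_0$ reversed (all other edges, including loops, unchanged). *)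

theory Defs
  imports Main "HOL-Library.FuncSet" "HOL-Library.Extended_Nat"
begin

datatype sign = Pos | Neg

fun sign_val :: "sign \<Rightarrow> int" where
  "sign_val Pos = 1" | "sign_val Neg = -1"

fun sign_flip :: "sign \<Rightarrow> sign" where
  "sign_flip Pos = Neg" | "sign_flip Neg = Pos"

text \<open>A signed graph: vertex set V, edge set E, endpoint map ends (loops: both ends equal;
  multiple edges allowed since edges are abstract), sign map sg.\<close>
definition signed_graph :: "'v set \<Rightarrow> 'e set \<Rightarrow> ('e \<Rightarrow> 'v \<times> 'v) \<Rightarrow> bool" where
  "signed_graph V E ends \<longleftrightarrow> finite V \<and> finite E \<and> (\<forall>e\<in>E. fst (ends e) \<in> V \<and> snd (ends e) \<in> V)"

definition proper_coloring ::
  "'v set \<Rightarrow> 'e set \<Rightarrow> ('e \<Rightarrow> 'v \<times> 'v) \<Rightarrow> ('e \<Rightarrow> sign) \<Rightarrow> ('v \<Rightarrow> int) \<Rightarrow> bool" where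
  "proper_coloring V E ends sg \<kappa> \<longleftrightarrow> \<kappa> \<in> extensional V \<and>
     (\<forall>e\<in>E. \<kappa> (fst (ends e)) \<noteq> sign_val (sg e) * \<kappa> (snd (ends e)))"

text \<open>Exponent vector of the monomial prod_v x_{kappa v}^{w+ v} x_{-kappa v}^{w- v}.\<close>
definition coloring_monomial :: "'v set \<Rightarrow> ('v \<Rightarrow> nat \<times> nat) \<Rightarrow> ('v \<Rightarrow> int) \<Rightarrow> (int \<Rightarrow> nat)" where
  "coloring_monomial V w \<kappa> = (\<lambda>i. \<Sum>v\<in>V. (if \<kappa> v = i then fst (w v) else 0)
                                       + (if - \<kappa> v = i then snd (w v) else 0))"

definition ecount :: "'a set \<Rightarrow> enat" where
  "ecount S = (if finite S then enat (card S) else \<infinity>)"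

text \<open>X as a formal power series: maps each monomial (exponent vector) to its coefficient,
  the number (possibly infinite) of proper colorings producing it.\<close>
definition chrom_X ::
  "'v set \<Rightarrow> 'e set \<Rightarrow> ('e \<Rightarrow> 'v \<times> 'v) \<Rightarrow> ('e \<Rightarrow> sign) \<Rightarrow> ('v \<Rightarrow> nat \<times> nat) \<Rightarrow> (int \<Rightarrow> nat) \<Rightarrow> enat" where
  "chrom_X V E ends sg w = (\<lambda>m. ecount {\<kappa>. proper_coloring V E ends sg \<kappa> \<and> coloring_monomial V w \<kappa> = m})"

definition switch_weight :: "'v \<Rightarrow> ('v \<Rightarrow> nat \<times> nat) \<Rightarrow> ('v \<Rightarrow> nat \<times> nat)" where
  "switch_weight v0 w = w(v0 := prod.swap (w v0))"

definition switch_sign :: "('e \<Rightarrow> 'v \<times> 'v) \<Rightarrow> 'v \<Rightarrow> ('e \<Rightarrow> sign) \<Rightarrow> ('e \<Rightarrow> sign)" where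
  "switch_sign ends v0 sg = (\<lambda>e. if fst (ends e) \<noteq> snd (ends e) \<and> (fst (ends e) = v0 \<or> snd (ends e) = v0)
                                  then sign_flip (sg e) else sg e)"

end

theory Submission
  imports Defs
begin

text \<open>Negating the colour of \<open>v\<^sub>0\<close> is an involution on colourings. On a non-loop edge at \<open>v\<^sub>0\<close>
  it changes the sign of exactly one side of the constraint \<open>\<kappa>(u) \<noteq> sgn(e) \<kappa>(v)\<close>, which is
  compensated by reversing \<open>sgn(e)\<close>; on a loop at \<open>v\<^sub>0\<close> it negates both sides, so the unchanged
  loop sign is right. It exchanges \<open>x\<^bsub>\<kappa>(v\<^sub>0)\<^esub>\<close> and \<open>x\<^bsub>-\<kappa>(v\<^sub>0)\<^esub>\<close> in the monomial, which is undone
  by swapping \<open>w(v\<^sub>0)\<close>. Hence it matches the colourings counted by each coefficient of the two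
  series bijectively.\<close>

lemma sign_val_sign_flip [simp]: "sign_val (sign_flip s) = - sign_val s"
  by (cases s) auto

lemma sign_flip_sign_flip [simp]: "sign_flip (sign_flip s) = s"
  by (cases s) auto

lemma ecount_vimage_bij:
  assumes "bij f"
  shows "ecount (f -` S) = ecount S"
  using assms unfolding ecount_def
  by (simp add: finite_vimage_iff card_vimage_inj bij_is_inj bij_is_surj)

definition negate_at :: "'v \<Rightarrow> ('v \<Rightarrow> int) \<Rightarrow> ('v \<Rightarrow> int)" where
  "negate_at v0 \<kappa> = \<kappa>(v0 := - \<kappa> v0)"

lemma negate_at_negate_at [simp]: "negate_at v0 (negate_at v0 \<kappa>) = \<kappa>"
  by (auto simp: negate_at_def)

lemma bij_negate_at: "bij (negate_at v0)"
  by (rule o_bij[of "negate_at v0"]) (simp_all add: fun_eq_iff)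

lemma switch_sign_switch_sign [simp]:
  "switch_sign ends v0 (switch_sign ends v0 sg) = sg"
  by (auto simp: switch_sign_def)

lemma proper_coloring_negate_at_switch_sign:
  assumes "v0 \<in> V" "proper_coloring V E ends sg \<kappa>"
  shows "proper_coloring V E ends (switch_sign ends v0 sg) (negate_at v0 \<kappa>)"
  using assms
  unfolding proper_coloring_def negate_at_def switch_sign_def extensional_def
  by auto

lemma proper_coloring_negate_at_switch_sign_iff:
  assumes "v0 \<in> V"
  shows "proper_coloring V E ends (switch_sign ends v0 sg) (negate_at v0 \<kappa>)
    \<longleftrightarrow> proper_coloring V E ends sg \<kappa>"
  using proper_coloring_negate_at_switch_sign[OF assms, of E ends sg \<kappa>]
    proper_coloring_negate_at_switch_sign[OF assms, of E ends "switch_sign ends v0 sg"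
      "negate_at v0 \<kappa>"]
  by auto

lemma coloring_monomial_negate_at_switch_weight:
  "coloring_monomial V (switch_weight v0 w) (negate_at v0 \<kappa>) = coloring_monomial V w \<kappa>"
  unfolding coloring_monomial_def switch_weight_def negate_at_def
  by (intro ext sum.cong) auto

theorem lemma4p2:
  fixes V :: "'v set" and E :: "'e set" and ends :: "'e \<Rightarrow> 'v \<times> 'v"
    and sg :: "'e \<Rightarrow> sign" and w :: "'v \<Rightarrow> nat \<times> nat" and v0 :: 'v
  assumes "signed_graph V E ends" and "v0 \<in> V"
  shows "chrom_X V E ends sg w = chrom_X V E ends (switch_sign ends v0 sg) (switch_weight v0 w)"
proof
  fix m
  let ?colorings = "\<lambda>sg w. {\<kappa>. proper_coloring V E ends sg \<kappa> \<and> coloring_monomial V w \<kappa> = m}"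
  have "?colorings sg w
      = negate_at v0 -` ?colorings (switch_sign ends v0 sg) (switch_weight v0 w)"
    by (simp add: proper_coloring_negate_at_switch_sign_iff[OF assms(2)]
        coloring_monomial_negate_at_switch_weight)
  then show "chrom_X V E ends sg w m
      = chrom_X V E ends (switch_sign ends v0 sg) (switch_weight v0 w) m"
    unfolding chrom_X_def by (simp only: ecount_vimage_bij[OF bij_negate_at])
qed

end
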